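(* The class of data languages accepted by SAFA is closed under concatenation: for any SAFA $M_1,M_2$ over $\Sigma\times D$, there is a SAFA $M$ with $L(M)=\{uv: u\in L(M_1),\ v\in L(M_2)\}$.
   Context: $D$ is a fixed countably infinite set of data values; for a finite alphabet $\Sigma$, data words are elements of $(\Sigma\times D)^*$. A set augmented finite automaton (SAFA) is a tuple $M=(Q,\Sigma\times D,q_0,F,H,\delta)$: $Q$ finite set of states, $q_0\in Q$ initial, $F\subseteq Q$ final, $H=\{h_1,\dots,h_m\}$ a finite collection of (names of) sets of data values, $\delta\subseteq Q\times\Sigma\times C\times OP\times Q$ with $C=\{p(h_i),\,!p(h_i): h_i\in H\}$, $OP=\{-\}\cup\{\mathsf{ins}(h_i):h_i\in H\}$. Configurations are $(q,\langle S_1,\dots,S_m\rangle)$ with $S_i\subseteq D$ finite; initially state $q_0$ and all sets empty. On reading $(a,d)$, a transition $(q,a,\alpha,op,q')$ from the current state may be taken if $\alpha=p(h_i)$ and $d\in S_i$, or $\alpha=\,!p(h_i)$ and $d\notin S_i$; then the state becomes $q'$ and if $op=\mathsf{ins}(h_j)$ the value $d$ is added to $S_j$ ($op=-$ changes nothing). A word is accepted if some run reads it entirely and ends in $F$; $L(M)$ is the set of accepted words. *)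

theory Defs
  imports Main "HOL-Library.Countable"
begin

text \<open>The data domain D is a type 'd
  that is countable and infinite; the finite alphabet is a type 'a of class finite.
  The set names H = {h_0,...,h_(m-1)} are represented by indices i < m.\<close>

datatype safa_cond = Mem nat | NotMem nat
datatype safa_op = NoOp | Ins nat

record ('q, 'a) safa =
  sa_states :: "'q set"
  sa_init   :: 'q
  sa_final  :: "'q set"
  sa_nsets  :: nat
  sa_trans  :: "('q \<times> 'a \<times> safa_cond \<times> safa_op \<times> 'q) set"

fun cond_idx :: "safa_cond \<Rightarrow> nat" where
  "cond_idx (Mem i) = i" | "cond_idx (NotMem i) = i"

fun op_ok :: "nat \<Rightarrow> safa_op \<Rightarrow> bool" where
  "op_ok m NoOp = True" | "op_ok m (Ins j) = (j < m)"

definition wf_safa :: "('q, 'a) safa \<Rightarrow> bool" where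
  "wf_safa M \<longleftrightarrow> finite (sa_states M) \<and> sa_init M \<in> sa_states M
     \<and> sa_final M \<subseteq> sa_states M
     \<and> (\<forall>(q, a, c, o', q') \<in> sa_trans M. q \<in> sa_states M \<and> q' \<in> sa_states M
            \<and> cond_idx c < sa_nsets M \<and> op_ok (sa_nsets M) o')"

fun cond_holds :: "safa_cond \<Rightarrow> (nat \<Rightarrow> 'd set) \<Rightarrow> 'd \<Rightarrow> bool" where
  "cond_holds (Mem i) S d = (d \<in> S i)"
| "cond_holds (NotMem i) S d = (d \<notin> S i)"

fun apply_op :: "safa_op \<Rightarrow> 'd \<Rightarrow> (nat \<Rightarrow> 'd set) \<Rightarrow> (nat \<Rightarrow> 'd set)" where
  "apply_op NoOp d S = S"
| "apply_op (Ins j) d S = S(j := insert d (S j))"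

inductive safa_run :: "('q, 'a) safa \<Rightarrow> 'q \<Rightarrow> (nat \<Rightarrow> 'd set) \<Rightarrow> ('a \<times> 'd) list \<Rightarrow> 'q \<Rightarrow> bool"
  for M where
  nil: "safa_run M q S [] q"
| cons: "\<lbrakk> (q, a, c, o', q') \<in> sa_trans M; cond_holds c S d;
          safa_run M q' (apply_op o' d S) w q'' \<rbrakk>
         \<Longrightarrow> safa_run M q S ((a, d) # w) q''"

definition safa_lang :: "('q, 'a) safa \<Rightarrow> ('a \<times> 'd) list set" where
  "safa_lang M = {w. \<exists>q. safa_run M (sa_init M) (\<lambda>_. {}) w q \<and> q \<in> sa_final M}"

end

theory Submission
  imports Defs "HOL-Library.Countable_Set"
begin

(* The automaton for the concatenation runs M1 and then M2 on the disjoint union of their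
   states, with the sets of M2 renumbered to lie above those of M1. Each final state of M1
   also gets the transitions leaving the initial state of M2, which simulates the switch
   without an epsilon move. Since M1 never inserts into the sets of M2, these are still empty
   at the switch; since M2 never tests the sets of M1, their contents do not matter afterwards. *)

definition reads_within :: "('q, 'a) safa \<Rightarrow> nat set \<Rightarrow> bool" where
  "reads_within M J \<longleftrightarrow> (\<forall>(q, a, c, o', q') \<in> sa_trans M. cond_idx c \<in> J)"

definition writes_within :: "('q, 'a) safa \<Rightarrow> nat set \<Rightarrow> bool" where
  "writes_within M I \<longleftrightarrow>
     (\<forall>(q, a, c, o', q') \<in> sa_trans M. \<forall>j. o' = Ins j \<longrightarrow> j \<in> I)"

lemma reads_withinD:
  "reads_within M J \<Longrightarrow> (q, a, c, o', q') \<in> sa_trans M \<Longrightarrow> cond_idx c \<in> J"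
  unfolding reads_within_def by auto

lemma writes_withinD:
  "writes_within M I \<Longrightarrow> (q, a, c, Ins j, q') \<in> sa_trans M \<Longrightarrow> j \<in> I"
  unfolding writes_within_def by auto

lemma wf_safa_transD:
  assumes "wf_safa M" and "(q, a, c, o', q') \<in> sa_trans M"
  shows "q \<in> sa_states M" "q' \<in> sa_states M" "cond_idx c < sa_nsets M" "op_ok (sa_nsets M) o'"
  using assms unfolding wf_safa_def by fast+

lemma wf_safaI:
  assumes "finite (sa_states M)" and "sa_init M \<in> sa_states M" and "sa_final M \<subseteq> sa_states M"
    and "\<And>q a c o' q'. (q, a, c, o', q') \<in> sa_trans M \<Longrightarrow>
      q \<in> sa_states M \<and> q' \<in> sa_states M \<and> cond_idx c < sa_nsets M \<and> op_ok (sa_nsets M) o'"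
  shows "wf_safa M"
  using assms unfolding wf_safa_def by fast

lemma writes_within_nsets: "wf_safa M \<Longrightarrow> writes_within M {..<sa_nsets M}"
  unfolding writes_within_def by (fastforce dest: wf_safa_transD(4))

lemma cond_holds_cong:
  "cond_idx c \<in> J \<Longrightarrow> \<forall>j\<in>J. S j = S' j \<Longrightarrow> cond_holds c S d = cond_holds c S' d"
  by (cases c) auto

lemma apply_op_cong:
  "\<forall>j\<in>J. S j = S' j \<Longrightarrow> \<forall>j\<in>J. apply_op o' d S j = apply_op o' d S' j"
  by (cases o') auto

lemma apply_op_keeps_empty:
  assumes "writes_within M I" and "(q, a, c, o', q') \<in> sa_trans M" and "I \<inter> J = {}"
    and "\<forall>j\<in>J. S j = {}"
  shows "\<forall>j\<in>J. apply_op o' d S j = {}"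
  using assms by (cases o') (auto dest: writes_withinD)

lemma safa_run_Nil_iff [simp]: "safa_run M q S [] p \<longleftrightarrow> p = q"
  by (auto elim: safa_run.cases intro: safa_run.nil)

lemma safa_run_cong:
  assumes "safa_run M q S w p" and "reads_within M J" and "\<forall>j\<in>J. S j = S' j"
  shows "safa_run M q S' w p"
  using assms
proof (induction arbitrary: S' rule: safa_run.induct)
  case (nil q S)
  show ?case by (rule safa_run.nil)
next
  case (cons q a c o' q' S d w q'')
  have "cond_holds c S' d"
    using cons.hyps(2) cond_holds_cong[OF reads_withinD[OF cons.prems(1) cons.hyps(1)] cons.prems(2)]
    by simp
  moreover have "safa_run M q' (apply_op o' d S') w q''"
    using cons.IH[OF cons.prems(1) apply_op_cong[OF cons.prems(2)]] .
  ultimately show ?case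
    by (rule safa_run.cons[OF cons.hyps(1)])
qed

fun shift_cond :: "nat \<Rightarrow> safa_cond \<Rightarrow> safa_cond" where
  "shift_cond k (Mem i) = Mem (k + i)"
| "shift_cond k (NotMem i) = NotMem (k + i)"

fun shift_op :: "nat \<Rightarrow> safa_op \<Rightarrow> safa_op" where
  "shift_op k NoOp = NoOp"
| "shift_op k (Ins j) = Ins (k + j)"

definition shift_sets :: "nat \<Rightarrow> ('q, 'a) safa \<Rightarrow> ('q, 'a) safa" where
  "shift_sets k M = M\<lparr>sa_nsets := k + sa_nsets M,
     sa_trans := {(q, a, shift_cond k c, shift_op k o', q') | q a c o' q'.
                    (q, a, c, o', q') \<in> sa_trans M}\<rparr>"

lemma shift_sets_simps [simp]:
  "sa_states (shift_sets k M) = sa_states M" "sa_init (shift_sets k M) = sa_init M"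
  "sa_final (shift_sets k M) = sa_final M" "sa_nsets (shift_sets k M) = k + sa_nsets M"
  by (simp_all add: shift_sets_def)

lemma cond_holds_shift_cond: "cond_holds (shift_cond k c) S d = cond_holds c (\<lambda>i. S (k + i)) d"
  by (cases c) auto

lemma apply_op_shift_op:
  "(\<lambda>i. apply_op (shift_op k o') d S (k + i)) = apply_op o' d (\<lambda>i. S (k + i))"
  by (cases o') (auto simp: fun_eq_iff)

lemma shift_sets_trans_iff:
  "(q, a, c, o', q') \<in> sa_trans (shift_sets k M) \<longleftrightarrow>
     (\<exists>c0 o0. c = shift_cond k c0 \<and> o' = shift_op k o0 \<and> (q, a, c0, o0, q') \<in> sa_trans M)"
  unfolding shift_sets_def by auto

lemma safa_run_shift_sets:
  "safa_run (shift_sets k M) q S w p \<longleftrightarrow> safa_run M q (\<lambda>i. S (k + i)) w p"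
proof
  show "safa_run M q (\<lambda>i. S (k + i)) w p" if "safa_run (shift_sets k M) q S w p"
    using that
  proof (induction rule: safa_run.induct)
    case (nil q S)
    show ?case by (rule safa_run.nil)
  next
    case (cons q a c o' q' S d w q'')
    then obtain c0 o0 where "c = shift_cond k c0" "o' = shift_op k o0"
      and "(q, a, c0, o0, q') \<in> sa_trans M"
      unfolding shift_sets_trans_iff by blast
    with cons show ?case
      by (auto simp: cond_holds_shift_cond apply_op_shift_op intro: safa_run.cons)
  qed
next
  have "safa_run (shift_sets k M) q S w p"
    if "safa_run M q S0 w p" and "S0 = (\<lambda>i. S (k + i))" for S0
    using that
  proof (induction arbitrary: S rule: safa_run.induct)
    case (nil q S)
    show ?case by (rule safa_run.nil)
  next
    case (cons q a c o' q' S0 d w q'')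
    have "(q, a, shift_cond k c, shift_op k o', q') \<in> sa_trans (shift_sets k M)"
      using cons.hyps(1) unfolding shift_sets_trans_iff by blast
    with cons show ?case
      by (auto simp: cond_holds_shift_cond apply_op_shift_op intro: safa_run.cons)
  qed
  then show "safa_run M q (\<lambda>i. S (k + i)) w p \<Longrightarrow> safa_run (shift_sets k M) q S w p"
    by blast
qed

lemma safa_lang_shift_sets: "safa_lang (shift_sets k M) = safa_lang M"
  by (simp add: safa_lang_def safa_run_shift_sets)

lemma cond_idx_shift_cond [simp]: "cond_idx (shift_cond k c) = k + cond_idx c"
  by (cases c) auto

lemma reads_within_shift_sets: "reads_within (shift_sets k M) {k..}"
  unfolding reads_within_def by (auto simp: shift_sets_trans_iff)

lemma wf_safa_shift_sets:
  assumes wfM: "wf_safa M"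
  shows "wf_safa (shift_sets k M)"
proof (rule wf_safaI)
  fix q a c o' q'
  assume "(q, a, c, o', q') \<in> sa_trans (shift_sets k M)"
  then obtain c0 o0 where c: "c = shift_cond k c0" and o: "o' = shift_op k o0"
    and t: "(q, a, c0, o0, q') \<in> sa_trans M"
    unfolding shift_sets_trans_iff by blast
  show "q \<in> sa_states (shift_sets k M) \<and> q' \<in> sa_states (shift_sets k M)
      \<and> cond_idx c < sa_nsets (shift_sets k M) \<and> op_ok (sa_nsets (shift_sets k M)) o'"
    using wf_safa_transD[OF wfM t] unfolding c o by (cases o0) auto
qed (use wfM in \<open>simp_all add: wf_safa_def\<close>)

definition safa_concat :: "('p, 'a) safa \<Rightarrow> ('q, 'a) safa \<Rightarrow> ('p + 'q, 'a) safa" where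
  "safa_concat M N = \<lparr>sa_states = Inl ` sa_states M \<union> Inr ` sa_states N,
     sa_init = Inl (sa_init M),
     sa_final = Inr ` sa_final N \<union> (if sa_init N \<in> sa_final N then Inl ` sa_final M else {}),
     sa_nsets = max (sa_nsets M) (sa_nsets N),
     sa_trans = {(Inl q, a, c, o', Inl q') | q a c o' q'. (q, a, c, o', q') \<in> sa_trans M}
       \<union> {(Inr q, a, c, o', Inr q') | q a c o' q'. (q, a, c, o', q') \<in> sa_trans N}
       \<union> {(Inl f, a, c, o', Inr q') | f a c o' q'.
            f \<in> sa_final M \<and> (sa_init N, a, c, o', q') \<in> sa_trans N}\<rparr>"

lemma safa_concat_simps [simp]:
  "sa_states (safa_concat M N) = Inl ` sa_states M \<union> Inr ` sa_states N"
  "sa_init (safa_concat M N) = Inl (sa_init M)"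
  "sa_final (safa_concat M N) =
     Inr ` sa_final N \<union> (if sa_init N \<in> sa_final N then Inl ` sa_final M else {})"
  "sa_nsets (safa_concat M N) = max (sa_nsets M) (sa_nsets N)"
  by (simp_all add: safa_concat_def)

lemma safa_concat_trans_Inl_iff:
  "(Inl q, a, c, o', y) \<in> sa_trans (safa_concat M N) \<longleftrightarrow>
     (\<exists>q'. y = Inl q' \<and> (q, a, c, o', q') \<in> sa_trans M)
   \<or> (\<exists>q'. y = Inr q' \<and> q \<in> sa_final M \<and> (sa_init N, a, c, o', q') \<in> sa_trans N)"
  unfolding safa_concat_def by auto

lemma safa_concat_trans_Inr_iff:
  "(Inr q, a, c, o', y) \<in> sa_trans (safa_concat M N) \<longleftrightarrow>
     (\<exists>q'. y = Inr q' \<and> (q, a, c, o', q') \<in> sa_trans N)"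
  unfolding safa_concat_def by auto

lemma op_ok_max_iff [simp]: "op_ok (max m n) o' \<longleftrightarrow> op_ok m o' \<or> op_ok n o'"
  by (cases o') auto

lemma wf_safa_concat:
  assumes wfM: "wf_safa M" and wfN: "wf_safa N"
  shows "wf_safa (safa_concat M N)"
proof (rule wf_safaI)
  fix x a c o' y
  assume tr: "(x, a, c, o', y) \<in> sa_trans (safa_concat M N)"
  show "x \<in> sa_states (safa_concat M N) \<and> y \<in> sa_states (safa_concat M N)
      \<and> cond_idx c < sa_nsets (safa_concat M N) \<and> op_ok (sa_nsets (safa_concat M N)) o'"
  proof (cases x)
    case (Inl q)
    from tr consider (M) q' where "y = Inl q'" "(q, a, c, o', q') \<in> sa_trans M"
      | (bridge) q' where "y = Inr q'" "q \<in> sa_final M" "(sa_init N, a, c, o', q') \<in> sa_trans N"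
      unfolding Inl safa_concat_trans_Inl_iff by blast
    then show ?thesis
    proof cases
      case M
      with wf_safa_transD[OF wfM M(2)] show ?thesis
        by (simp add: Inl)
    next
      case bridge
      moreover have "q \<in> sa_states M"
        using wfM bridge(2) unfolding wf_safa_def by blast
      ultimately show ?thesis
        using wf_safa_transD[OF wfN bridge(3)] by (simp add: Inl)
    qed
  next
    case (Inr q)
    from tr obtain q' where "y = Inr q'" and t: "(q, a, c, o', q') \<in> sa_trans N"
      unfolding Inr safa_concat_trans_Inr_iff by blast
    with wf_safa_transD[OF wfN t] show ?thesis
      by (simp add: Inr)
  qed
qed (use wfM wfN in \<open>auto simp: wf_safa_def\<close>)

lemma safa_run_concat_Inr_iff:
  "safa_run (safa_concat M N) (Inr q) S w p \<longleftrightarrow> (\<exists>g. p = Inr g \<and> safa_run N q S w g)"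
proof
  have "\<exists>g. p = Inr g \<and> safa_run N q S w g"
    if "safa_run (safa_concat M N) x S w p" and "x = Inr q" for x
    using that
  proof (induction arbitrary: q rule: safa_run.induct)
    case (nil x S)
    then show ?case by (auto intro: safa_run.nil)
  next
    case (cons x a c o' y S d w p)
    from cons.hyps(1) cons.prems have "(Inr q, a, c, o', y) \<in> sa_trans (safa_concat M N)"
      by simp
    then obtain q' where "y = Inr q'" and "(q, a, c, o', q') \<in> sa_trans N"
      unfolding safa_concat_trans_Inr_iff by blast
    with cons show ?case by (blast intro: safa_run.cons)
  qed
  then show "safa_run (safa_concat M N) (Inr q) S w p \<Longrightarrow>
      \<exists>g. p = Inr g \<and> safa_run N q S w g"
    by blast
next
  have "safa_run (safa_concat M N) (Inr q) S w (Inr g)" if "safa_run N q S w g"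
    for g using that
  proof (induction rule: safa_run.induct)
    case (nil q S)
    show ?case by (rule safa_run.nil)
  next
    case (cons q a c o' q' S d w q'')
    then show ?case
      using safa_concat_trans_Inr_iff[of q a c o' "Inr q'" M N]
      by (blast intro: safa_run.cons)
  qed
  then show "\<exists>g. p = Inr g \<and> safa_run N q S w g \<Longrightarrow>
      safa_run (safa_concat M N) (Inr q) S w p"
    by blast
qed

lemma safa_run_concat_bridge:
  assumes "f \<in> sa_final M" and "safa_run N (sa_init N) S (x # w) g"
  shows "safa_run (safa_concat M N) (Inl f) S (x # w) (Inr g)"
  using assms(2)
proof cases
  case (cons a c o' q' d)
  have "(Inl f, a, c, o', Inr q') \<in> sa_trans (safa_concat M N)"
    using assms(1) cons(2) unfolding safa_concat_trans_Inl_iff by blast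
  moreover have "safa_run (safa_concat M N) (Inr q') (apply_op o' d S) w (Inr g)"
    using cons(4) by (simp add: safa_run_concat_Inr_iff)
  ultimately show ?thesis
    using cons(1,3) by (blast intro: safa_run.cons)
qed

lemma safa_run_concat_InlI:
  assumes "safa_run M q S u f" and "writes_within M I" and "I \<inter> J = {}"
    and "\<forall>j\<in>J. S j = {}"
    and "\<And>S'. \<forall>j\<in>J. S' j = {} \<Longrightarrow> safa_run (safa_concat M N) (Inl f) S' v p"
  shows "safa_run (safa_concat M N) (Inl q) S (u @ v) p"
  using assms
proof (induction rule: safa_run.induct)
  case (nil q S)
  then show ?case by simp
next
  case (cons q a c o' q' S d w f)
  have "(Inl q, a, c, o', Inl q') \<in> sa_trans (safa_concat M N)"
    using cons.hyps(1) by (simp add: safa_concat_trans_Inl_iff)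
  moreover have "\<forall>j\<in>J. apply_op o' d S j = {}"
    using apply_op_keeps_empty[OF cons.prems(1) cons.hyps(1) cons.prems(2,3)] .
  then have "safa_run (safa_concat M N) (Inl q') (apply_op o' d S) (w @ v) p"
    using cons.IH cons.prems(1,2,4) by blast
  ultimately show ?case
    using cons.hyps(2) by (simp add: safa_run.cons)
qed

lemma safa_run_concat_InlE:
  assumes "safa_run (safa_concat M N) (Inl q) S w p"
    and "writes_within M I" and "reads_within N J" and "I \<inter> J = {}"
    and "\<forall>j\<in>J. S j = {}"
  shows "(\<exists>f. p = Inl f \<and> safa_run M q S w f)
    \<or> (\<exists>u v f g. w = u @ v \<and> safa_run M q S u f \<and> f \<in> sa_final M \<and> p = Inr g
         \<and> safa_run N (sa_init N) (\<lambda>_. {}) v g)"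
proof -
  have ?thesis
    if "safa_run (safa_concat M N) x S w p" and "x = Inl q" and "\<forall>j\<in>J. S j = {}" for x
    using that
  proof (induction arbitrary: q rule: safa_run.induct)
    case (nil x S)
    then show ?case by simp
  next
    case (cons x a c o' y S d w p)
    from cons.hyps(1) consider (M) q' where "y = Inl q'" "(q, a, c, o', q') \<in> sa_trans M"
      | (bridge) q' where "y = Inr q'" "q \<in> sa_final M" "(sa_init N, a, c, o', q') \<in> sa_trans N"
      unfolding cons.prems(1) safa_concat_trans_Inl_iff by blast
    then show ?case
    proof cases
      case M
      have "\<forall>j\<in>J. apply_op o' d S j = {}"
        using apply_op_keeps_empty[OF assms(2) M(2) assms(4) cons.prems(2)] .
      from cons.IH[OF M(1) this] show ?thesis
        using safa_run.cons[OF M(2) cons.hyps(2)] by (metis append_Cons)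
    next
      case bridge
      from cons.hyps(3) obtain g where g: "p = Inr g"
        and "safa_run N q' (apply_op o' d S) w g"
        unfolding bridge(1) safa_run_concat_Inr_iff by blast
      then have "safa_run N (sa_init N) S ((a, d) # w) g"
        using safa_run.cons[OF bridge(3) cons.hyps(2)] by blast
      then have "safa_run N (sa_init N) (\<lambda>_. {}) ((a, d) # w) g"
        by (rule safa_run_cong[OF _ assms(3)]) (simp add: cons.prems(2))
      with g bridge(2) show ?thesis
        by (metis append_Nil safa_run.nil)
    qed
  qed
  then show ?thesis
    using assms(1,5) by blast
qed

lemma safa_lang_concat:
  fixes M :: "('p, 'a) safa" and N :: "('q, 'a) safa"
  assumes M: "writes_within M I" and N: "reads_within N J" and IJ: "I \<inter> J = {}"
  shows "safa_lang (safa_concat M N) = {u @ v | u v. u \<in> safa_lang M \<and> v \<in> safa_lang N}"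
proof (intro set_eqI iffI)
  fix w :: "('a \<times> 'd) list"
  assume "w \<in> safa_lang (safa_concat M N)"
  then obtain p where run: "safa_run (safa_concat M N) (Inl (sa_init M)) (\<lambda>_. {}) w p"
    and p: "p \<in> sa_final (safa_concat M N)"
    unfolding safa_lang_def by auto
  from safa_run_concat_InlE[OF run M N IJ ballI[OF refl]]
  show "w \<in> {u @ v | u v. u \<in> safa_lang M \<and> v \<in> safa_lang N}"
  proof (elim disjE exE conjE)
    fix f
    assume "p = Inl f" and "safa_run M (sa_init M) (\<lambda>_. {}) w f"
    moreover from p \<open>p = Inl f\<close> have "f \<in> sa_final M" and "sa_init N \<in> sa_final N"
      by (auto split: if_splits)
    ultimately show ?thesis
      unfolding safa_lang_def by force
  next
    fix u v f g
    assume "w = u @ v" and "safa_run M (sa_init M) (\<lambda>_. {}) u f" and "f \<in> sa_final M"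
      and "p = Inr g" and "safa_run N (sa_init N) (\<lambda>_. {}) v g"
    moreover from p \<open>p = Inr g\<close> have "g \<in> sa_final N"
      by (auto split: if_splits)
    ultimately show ?thesis
      unfolding safa_lang_def by blast
  qed
next
  fix w :: "('a \<times> 'd) list"
  assume "w \<in> {u @ v | u v. u \<in> safa_lang M \<and> v \<in> safa_lang N}"
  then obtain u v f g where w: "w = u @ v"
    and u: "safa_run M (sa_init M) (\<lambda>_. {}) u f" and f: "f \<in> sa_final M"
    and v: "safa_run N (sa_init N) (\<lambda>_. {}) v g" and g: "g \<in> sa_final N"
    unfolding safa_lang_def by blast
  show "w \<in> safa_lang (safa_concat M N)"
  proof (cases v)
    case Nil
    have "safa_run (safa_concat M N) (Inl (sa_init M)) (\<lambda>_. {}) (u @ []) (Inl f)"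
      by (rule safa_run_concat_InlI[OF u M IJ]) simp_all
    moreover have "Inl f \<in> sa_final (safa_concat M N)"
      using v g f Nil by simp
    ultimately show ?thesis
      unfolding safa_lang_def w Nil by auto
  next
    case (Cons x v')
    have "safa_run (safa_concat M N) (Inl f) S' v (Inr g)" if "\<forall>j\<in>J. S' j = {}" for S'
    proof -
      have "safa_run N (sa_init N) S' v g"
        by (rule safa_run_cong[OF v N]) (simp add: that)
      then show ?thesis
        unfolding Cons by (rule safa_run_concat_bridge[OF f])
    qed
    then have "safa_run (safa_concat M N) (Inl (sa_init M)) (\<lambda>_. {}) (u @ v) (Inr g)"
      by (intro safa_run_concat_InlI[OF u M IJ]) simp_all
    then show ?thesis
      unfolding safa_lang_def w using g by auto
  qed
qed

definition map_states :: "('q \<Rightarrow> 'p) \<Rightarrow> ('q, 'a) safa \<Rightarrow> ('p, 'a) safa" where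
  "map_states h M = \<lparr>sa_states = h ` sa_states M, sa_init = h (sa_init M),
     sa_final = h ` sa_final M, sa_nsets = sa_nsets M,
     sa_trans = {(h q, a, c, o', h q') | q a c o' q'. (q, a, c, o', q') \<in> sa_trans M}\<rparr>"

lemma map_states_simps [simp]:
  "sa_states (map_states h M) = h ` sa_states M" "sa_init (map_states h M) = h (sa_init M)"
  "sa_final (map_states h M) = h ` sa_final M" "sa_nsets (map_states h M) = sa_nsets M"
  by (simp_all add: map_states_def)

lemma map_states_trans_iff:
  "(x, a, c, o', y) \<in> sa_trans (map_states h M) \<longleftrightarrow>
     (\<exists>q q'. x = h q \<and> y = h q' \<and> (q, a, c, o', q') \<in> sa_trans M)"
  unfolding map_states_def by auto

lemma wf_safa_map_states:
  assumes wfM: "wf_safa M"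
  shows "wf_safa (map_states h M)"
proof (rule wf_safaI)
  fix x a c o' y
  assume "(x, a, c, o', y) \<in> sa_trans (map_states h M)"
  then obtain q q' where "x = h q" "y = h q'" and t: "(q, a, c, o', q') \<in> sa_trans M"
    unfolding map_states_trans_iff by blast
  with wf_safa_transD[OF wfM t] show "x \<in> sa_states (map_states h M) \<and> y \<in> sa_states (map_states h M)
      \<and> cond_idx c < sa_nsets (map_states h M) \<and> op_ok (sa_nsets (map_states h M)) o'"
    by simp
qed (use wfM in \<open>auto simp: wf_safa_def\<close>)

lemma safa_run_map_states_iff:
  assumes wfM: "wf_safa M" and inj: "inj_on h (sa_states M)" and q: "q \<in> sa_states M"
  shows "safa_run (map_states h M) (h q) S w p
    \<longleftrightarrow> (\<exists>q'. p = h q' \<and> q' \<in> sa_states M \<and> safa_run M q S w q')"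
proof
  have "\<exists>q'. p = h q' \<and> q' \<in> sa_states M \<and> safa_run M q S w q'"
    if "safa_run (map_states h M) x S w p" and "x = h q" and "q \<in> sa_states M" for x
    using that
  proof (induction arbitrary: q rule: safa_run.induct)
    case (nil x S)
    then show ?case by auto
  next
    case (cons x a c o' y S d w p)
    from cons.hyps(1) obtain q1 q1' where "x = h q1" "y = h q1'"
      and t: "(q1, a, c, o', q1') \<in> sa_trans M"
      unfolding map_states_trans_iff by blast
    moreover have "q1 = q"
      using inj_onD[OF inj] wf_safa_transD(1)[OF wfM t] cons.prems \<open>x = h q1\<close> by metis
    ultimately show ?case
      using cons.IH wf_safa_transD(2)[OF wfM t] safa_run.cons[OF t cons.hyps(2)] by blast
  qed
  then show "safa_run (map_states h M) (h q) S w p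
    \<Longrightarrow> \<exists>q'. p = h q' \<and> q' \<in> sa_states M \<and> safa_run M q S w q'"
    using q by blast
next
  have "safa_run (map_states h M) (h q) S w (h q')" if "safa_run M q S w q'" for q q'
    using that
  proof (induction rule: safa_run.induct)
    case (nil q S)
    then show ?case by simp
  next
    case (cons q a c o' q' S d w q'')
    then have "(h q, a, c, o', h q') \<in> sa_trans (map_states h M)"
      unfolding map_states_trans_iff by blast
    with cons show ?case
      by (blast intro: safa_run.cons)
  qed
  then show "\<exists>q'. p = h q' \<and> q' \<in> sa_states M \<and> safa_run M q S w q'
    \<Longrightarrow> safa_run (map_states h M) (h q) S w p"
    by blast
qed

lemma safa_lang_map_states:
  fixes M :: "('q, 'a) safa" and h :: "'q \<Rightarrow> 'p"
  assumes wfM: "wf_safa M" and inj: "inj_on h (sa_states M)"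
  shows "safa_lang (map_states h M) = safa_lang M"
proof (rule set_eqI)
  fix w :: "('a \<times> 'd) list"
  have init: "sa_init M \<in> sa_states M" and final: "sa_final M \<subseteq> sa_states M"
    using wfM unfolding wf_safa_def by auto
  have "w \<in> safa_lang (map_states h M) \<longleftrightarrow>
      (\<exists>q. q \<in> sa_states M \<and> safa_run M (sa_init M) (\<lambda>_. {}) w q \<and> h q \<in> h ` sa_final M)"
    unfolding safa_lang_def map_states_simps safa_run_map_states_iff[OF wfM inj init] by blast
  also have "\<dots> \<longleftrightarrow> (\<exists>q. safa_run M (sa_init M) (\<lambda>_. {}) w q \<and> q \<in> sa_final M)"
    using inj_on_image_mem_iff[OF inj _ final] final by blast
  also have "\<dots> \<longleftrightarrow> w \<in> safa_lang M"
    by (simp add: safa_lang_def)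
  finally show "w \<in> safa_lang (map_states h M) \<longleftrightarrow> w \<in> safa_lang M" .
qed

lemma wf_safa_ex_nat_states:
  assumes "wf_safa (M :: ('q, 'a) safa)"
  shows "\<exists>M' :: (nat, 'a) safa. wf_safa M' \<and>
    (safa_lang M' :: ('a \<times> 'd) list set) = safa_lang M"
proof -
  have "countable (sa_states M)"
    using assms unfolding wf_safa_def by (simp add: countable_finite)
  then have "inj_on (to_nat_on (sa_states M)) (sa_states M)"
    by (rule inj_on_to_nat_on)
  with assms show ?thesis
    using wf_safa_map_states safa_lang_map_states by blast
qed

theorem theorem6:
  fixes M1 :: "('q1, 'a::finite) safa" and M2 :: "('q2, 'a) safa"
  assumes "infinite (UNIV :: ('d::countable) set)"
    and "wf_safa M1" and "wf_safa M2"
  shows "\<exists>M :: (nat, 'a) safa. wf_safa M \<and>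
           safa_lang M = {u @ v | u v. u \<in> (safa_lang M1 :: ('a \<times> 'd) list set) \<and> v \<in> safa_lang M2}"
proof -
  let ?M = "safa_concat M1 (shift_sets (sa_nsets M1) M2)"
  have disjoint: "{..<sa_nsets M1} \<inter> {sa_nsets M1..} = {}"
    by auto
  have "wf_safa ?M"
    using assms(2,3) by (simp add: wf_safa_concat wf_safa_shift_sets)
  moreover have "(safa_lang ?M :: ('a \<times> 'd) list set)
      = {u @ v | u v. u \<in> safa_lang M1 \<and> v \<in> safa_lang M2}"
    using safa_lang_concat[OF writes_within_nsets[OF assms(2)] reads_within_shift_sets disjoint]
    by (simp add: safa_lang_shift_sets)
  ultimately show ?thesis
    using wf_safa_ex_nat_states by metis
qed

end
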